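(* Consider the coordination game and let $\mathcal Z$ be the set of $z\in\{0,\tfrac1n,\dots,1\}$ such that $z=F_c\!\left(\frac{n}{n-1}(z-\epsilon)\right)$ for every $\epsilon\in(0,\tfrac1n]$. Then for each $z\in\mathcal Z$ there is exactly one Nash equilibrium $x^*$ with $z(x^* )=z$, and the number of Nash equilibria satisfies $|\mathcal N|=|\mathcal Z|$, with $1\le|\mathcal Z|\le n+1$.
   Context: Let $\mathcal V$ be a finite set of $n\ge2$ agents, all coordinating. Given real weights $d_i$, the coordination game has action set $\{-1,+1\}$, configuration space $\mathcal X=\{-1,+1\}^{\mathcal V}$ and utilities $u_i(x)=\sum_{j\neq i}x_ix_j-d_ix_i$. A (pure) Nash equilibrium is an $x\in\mathcal X$ with $u_i(x)\ge u_i(y_i,x_{-i})$ for all $i$ and $y_i\in\{-1,+1\}$; $\mathcal N$ denotes the set of Nash equilibria. Thresholds: $r_i=\tfrac12+\tfrac{d_i}{2(n-1)}$. For $x\in\mathcal X$, $z(x)=\frac1n|\{i: x_i=+1\}|$. The threshold CDF is $F_c(t)=\frac1n|\{i\in\mathcal V: r_i\le t\}|$, $t\in\mathbb R$. *)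

theory Defs
  imports Complex_Main "HOL-Library.FuncSet"
begin

definition configs :: "'a set \<Rightarrow> ('a \<Rightarrow> int) set" where
  "configs V = V \<rightarrow>\<^sub>E {-1, 1}"

definition utility :: "'a set \<Rightarrow> ('a \<Rightarrow> real) \<Rightarrow> 'a \<Rightarrow> ('a \<Rightarrow> int) \<Rightarrow> real" where
  "utility V d i x = (\<Sum>j\<in>V - {i}. real_of_int (x i * x j)) - d i * real_of_int (x i)"

definition nash :: "'a set \<Rightarrow> ('a \<Rightarrow> real) \<Rightarrow> ('a \<Rightarrow> int) set" where
  "nash V d = {x \<in> configs V. \<forall>i\<in>V. \<forall>y\<in>{-1, 1::int}.
       utility V d i x \<ge> utility V d i (x(i := y))}"

definition threshold :: "'a set \<Rightarrow> ('a \<Rightarrow> real) \<Rightarrow> 'a \<Rightarrow> real" where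
  "threshold V d i = 1/2 + d i / (2 * (real (card V) - 1))"

definition zfrac :: "'a set \<Rightarrow> ('a \<Rightarrow> int) \<Rightarrow> real" where
  "zfrac V x = real (card {i\<in>V. x i = 1}) / real (card V)"

definition Fc :: "'a set \<Rightarrow> ('a \<Rightarrow> real) \<Rightarrow> real \<Rightarrow> real" where
  "Fc V d t = real (card {i\<in>V. threshold V d i \<le> t}) / real (card V)"

definition Zset :: "'a set \<Rightarrow> ('a \<Rightarrow> real) \<Rightarrow> real set" where
  "Zset V d = {z. (\<exists>k::nat. k \<le> card V \<and> z = real k / real (card V)) \<and>
     (\<forall>\<epsilon>::real. 0 < \<epsilon> \<and> \<epsilon> \<le> 1 / real (card V) \<longrightarrow>
        z = Fc V d (real (card V) / (real (card V) - 1) * (z - \<epsilon>)))}"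

end

theory Submission
  imports Defs
begin

text \<open>Against a configuration with k agents playing +1, agent i's best reply depends only on k:
  +1 is a best reply iff r_i \<le> (k-1)/(n-1) (if i plays +1) and -1 is one iff r_i \<ge> k/(n-1)
  (if i plays -1). Hence an equilibrium with k agents at +1 is the profile in which exactly the
  agents with r_i \<le> (k-1)/(n-1) play +1, and it exists iff there are k such agents and no
  threshold lies in ((k-1)/(n-1), k/(n-1)). This is precisely the condition that F_c equals k/n
  on [(k-1)/(n-1), k/(n-1)), i.e. that k/n lies in Z. Such a k exists by a discrete
  intermediate value argument, and there are at most n+1 candidates k.\<close>

lemma discrete_fixed_point:
  fixes f g :: "nat \<Rightarrow> nat"
  assumes f_le_g: "\<And>k. f k \<le> g k" and g_le_f_Suc: "\<And>k. g k \<le> f (Suc k)" and "g N \<le> N"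
  shows "\<exists>k. f k = k \<and> g k = k"
proof -
  define k where "k = (LEAST k. g k \<le> k)"
  have gk: "g k \<le> k"
    unfolding k_def by (rule LeastI[of _ N]) (rule assms(3))
  have "k \<le> f k"
  proof (cases k)
    case (Suc j)
    have "\<not> g j \<le> j"
      using Suc k_def not_less_Least lessI by metis
    then show ?thesis
      using g_le_f_Suc[of j] Suc by simp
  qed simp
  then have "f k = k \<and> g k = k"
    using gk f_le_g[of k] by linarith
  then show ?thesis ..
qed

lemma card_sublevel_constant_iff:
  fixes r :: "'a \<Rightarrow> real"
  assumes fin: "finite V" and "a < b"
  shows "(\<forall>t. a \<le> t \<and> t < b \<longrightarrow> card {i\<in>V. r i \<le> t} = k)
     \<longleftrightarrow> card {i\<in>V. r i \<le> a} = k \<and> card {i\<in>V. r i < b} = k"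
proof
  assume const: "\<forall>t. a \<le> t \<and> t < b \<longrightarrow> card {i\<in>V. r i \<le> t} = k"
  then have card_a: "card {i\<in>V. r i \<le> a} = k"
    using \<open>a < b\<close> by simp
  have "{i\<in>V. r i < b} \<subseteq> {i\<in>V. r i \<le> a}"
  proof (rule subsetI, rule ccontr)
    fix i assume i: "i \<in> {i\<in>V. r i < b}" "i \<notin> {i\<in>V. r i \<le> a}"
    then have "{i\<in>V. r i \<le> a} \<subset> {j\<in>V. r j \<le> r i}"
      by auto
    then have "card {i\<in>V. r i \<le> a} < card {j\<in>V. r j \<le> r i}"
      using fin by (intro psubset_card_mono) auto
    moreover have "card {j\<in>V. r j \<le> r i} = k"
      using const i by auto
    ultimately show False
      using card_a by simp
  qed
  then have "{i\<in>V. r i < b} = {i\<in>V. r i \<le> a}"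
    using \<open>a < b\<close> by auto
  then show "card {i\<in>V. r i \<le> a} = k \<and> card {i\<in>V. r i < b} = k"
    using card_a by simp
next
  assume cards: "card {i\<in>V. r i \<le> a} = k \<and> card {i\<in>V. r i < b} = k"
  have eq: "{i\<in>V. r i \<le> a} = {i\<in>V. r i < b}"
    using cards fin \<open>a < b\<close> by (intro card_subset_eq) auto
  show "\<forall>t. a \<le> t \<and> t < b \<longrightarrow> card {i\<in>V. r i \<le> t} = k"
  proof (intro allI impI)
    fix t assume "a \<le> t \<and> t < b"
    then have "{i\<in>V. r i \<le> t} = {i\<in>V. r i \<le> a}"
      using eq by fastforce
    then show "card {i\<in>V. r i \<le> t} = k"
      using cards by simp
  qed
qed

lemma configs_values: "x \<in> configs V \<Longrightarrow> j \<in> V \<Longrightarrow> x j = 1 \<or> x j = -1"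
  by (auto simp: configs_def PiE_iff)

lemma sum_configs:
  assumes "finite V" "x \<in> configs V"
  shows "(\<Sum>j\<in>V. real_of_int (x j)) = 2 * real (card {j\<in>V. x j = 1}) - real (card V)"
proof -
  have "(\<Sum>j\<in>V. real_of_int (x j)) = (\<Sum>j\<in>V. 2 * (if x j = 1 then 1 else 0) - 1)"
    using configs_values[OF assms(2)] by (intro sum.cong) fastforce+
  also have "\<dots> = 2 * real (card {j\<in>V. x j = 1}) - real (card V)"
    using assms(1) by (simp add: sum_subtractf sum_distrib_left[symmetric] sum.If_cases Collect_conj_eq)
  finally show ?thesis .
qed

lemma utility_fun_upd:
  assumes "i \<in> V"
  shows "utility V d i (x(i := y)) = real_of_int y * ((\<Sum>j\<in>V-{i}. real_of_int (x j)) - d i)"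
proof -
  have "(\<Sum>j\<in>V-{i}. real_of_int (y * (x(i := y)) j)) = real_of_int y * (\<Sum>j\<in>V-{i}. real_of_int (x j))"
    by (simp add: sum_distrib_left)
  then show ?thesis
    unfolding utility_def by (simp add: algebra_simps)
qed

lemma threshold_eq:
  assumes "card V \<ge> 2"
  shows "threshold V d i = (real (card V) - 1 + d i) / (2 * (real (card V) - 1))"
  using assms unfolding threshold_def by (simp add: field_simps)

lemma threshold_le_iff:
  assumes "card V \<ge> 2"
  shows "threshold V d i \<le> (real k - 1) / (real (card V) - 1) \<longleftrightarrow> d i \<le> 2 * real k - real (card V) - 1"
proof -
  have "(real k - 1) / (real (card V) - 1) = (2 * (real k - 1)) / (2 * (real (card V) - 1))"
    by (rule mult_divide_mult_cancel_left[symmetric]) simp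
  then show ?thesis
    using assms by (simp add: threshold_eq divide_le_cancel) arith
qed

lemma threshold_less_iff:
  assumes "card V \<ge> 2"
  shows "threshold V d i < real k / (real (card V) - 1) \<longleftrightarrow> d i < 2 * real k - real (card V) + 1"
proof -
  have "real k / (real (card V) - 1) = (2 * real k) / (2 * (real (card V) - 1))"
    by (rule mult_divide_mult_cancel_left[symmetric]) simp
  then show ?thesis
    using assms by (simp add: threshold_eq divide_less_cancel) arith
qed

lemma grid_step_less:
  "card V \<ge> 2 \<Longrightarrow> (real k - 1) / (real (card V) - 1) < real k / (real (card V) - 1)"
  by (simp add: divide_strict_right_mono)

lemma nash_iff:
  assumes fin: "finite V" and n2: "card V \<ge> 2" and x: "x \<in> configs V"
  defines "k \<equiv> card {j\<in>V. x j = 1}"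
  shows "x \<in> nash V d \<longleftrightarrow> (\<forall>i\<in>V.
           (x i = 1 \<longrightarrow> threshold V d i \<le> (real k - 1) / (real (card V) - 1)) \<and>
           (x i = -1 \<longrightarrow> \<not> threshold V d i < real k / (real (card V) - 1)))"
proof -
  have best_reply: "(\<forall>y\<in>{-1, 1::int}. utility V d i x \<ge> utility V d i (x(i := y))) \<longleftrightarrow>
      (x i = 1 \<longrightarrow> threshold V d i \<le> (real k - 1) / (real (card V) - 1)) \<and>
      (x i = -1 \<longrightarrow> \<not> threshold V d i < real k / (real (card V) - 1))" if i: "i \<in> V" for i
  proof -
    define S where "S = (\<Sum>j\<in>V-{i}. real_of_int (x j))"
    have S: "S = 2 * real k - real (card V) - real_of_int (x i)"
      using sum_configs[OF fin x] sum.remove[OF fin i, of "\<lambda>j. real_of_int (x j)"]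
      unfolding S_def k_def by simp
    have "utility V d i x = real_of_int (x i) * (S - d i)"
      using utility_fun_upd[OF i, of d x "x i"] unfolding S_def by simp
    moreover have "utility V d i (x(i := y)) = real_of_int y * (S - d i)" for y
      unfolding S_def by (rule utility_fun_upd[OF i])
    ultimately show ?thesis
      using configs_values[OF x i] S threshold_le_iff[OF n2] threshold_less_iff[OF n2] by auto
  qed
  show ?thesis
    unfolding nash_def using best_reply x by auto
qed

definition nash_level :: "'a set \<Rightarrow> ('a \<Rightarrow> real) \<Rightarrow> nat \<Rightarrow> bool" where
  "nash_level V d k \<longleftrightarrow>
     card {i\<in>V. threshold V d i \<le> (real k - 1) / (real (card V) - 1)} = k \<and>
     card {i\<in>V. threshold V d i < real k / (real (card V) - 1)} = k"

definition level_profile :: "'a set \<Rightarrow> ('a \<Rightarrow> real) \<Rightarrow> nat \<Rightarrow> 'a \<Rightarrow> int" where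
  "level_profile V d k =
     restrict (\<lambda>i. if threshold V d i \<le> (real k - 1) / (real (card V) - 1) then 1 else -1) V"

lemma level_profile_configs: "level_profile V d k \<in> configs V"
  unfolding level_profile_def configs_def by auto

lemma card_level_profile:
  "card {j\<in>V. level_profile V d k j = 1} =
     card {i\<in>V. threshold V d i \<le> (real k - 1) / (real (card V) - 1)}"
  unfolding level_profile_def by (auto intro: arg_cong[where f = card])

lemma nash_level_le_card: "finite V \<Longrightarrow> nash_level V d k \<Longrightarrow> k \<le> card V"
  unfolding nash_level_def by (metis (no_types, lifting) card_mono mem_Collect_eq subsetI)

lemma nash_imp_nash_level:
  assumes fin: "finite V" and n2: "card V \<ge> 2" and x: "x \<in> nash V d"
  defines "k \<equiv> card {j\<in>V. x j = 1}"
  shows "nash_level V d k \<and> x = level_profile V d k"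
proof -
  have xc: "x \<in> configs V"
    using x by (simp add: nash_def)
  have "{j\<in>V. x j = 1} = {i\<in>V. threshold V d i \<le> (real k - 1) / (real (card V) - 1)}"
        "{j\<in>V. x j = 1} = {i\<in>V. threshold V d i < real k / (real (card V) - 1)}"
    using x nash_iff[OF fin n2 xc, of d] configs_values[OF xc] grid_step_less[OF n2, of k]
    unfolding k_def by fastforce+
  then have level: "nash_level V d k"
    unfolding nash_level_def k_def by simp
  have "x i = level_profile V d k i" for i
  proof (cases "i \<in> V")
    case True
    then show ?thesis
      using x nash_iff[OF fin n2 xc, of d] configs_values[OF xc True] grid_step_less[OF n2, of k]
      unfolding level_profile_def k_def by auto
  next
    case False
    then show ?thesis
      using xc unfolding level_profile_def configs_def by (auto simp: PiE_iff extensional_def)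
  qed
  then show ?thesis
    using level by auto
qed

lemma level_profile_nash:
  assumes fin: "finite V" and n2: "card V \<ge> 2" and level: "nash_level V d k"
  shows "level_profile V d k \<in> nash V d"
proof -
  have "card {j\<in>V. level_profile V d k j = 1} = k"
    using level unfolding card_level_profile nash_level_def by simp
  moreover have "{i\<in>V. threshold V d i < real k / (real (card V) - 1)} =
      {i\<in>V. threshold V d i \<le> (real k - 1) / (real (card V) - 1)}"
    using level fin grid_step_less[OF n2, of k] by (intro card_subset_eq[symmetric])
      (auto simp: nash_level_def)
  ultimately show ?thesis
    using nash_iff[OF fin n2 level_profile_configs] unfolding level_profile_def by auto
qed

lemma nash_eq_image:
  assumes "finite V" and "card V \<ge> 2"
  shows "nash V d = level_profile V d ` {k. nash_level V d k}"
  using nash_imp_nash_level[OF assms] level_profile_nash[OF assms] by blast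

lemma zfrac_level_profile:
  "nash_level V d k \<Longrightarrow> zfrac V (level_profile V d k) = real k / real (card V)"
  unfolding zfrac_def card_level_profile nash_level_def by simp

lemma exists_nash_level:
  assumes fin: "finite V" and n2: "card V \<ge> 2"
  shows "\<exists>k. nash_level V d k"
proof -
  let ?m = "real (card V) - 1"
  have "\<exists>k. card {i\<in>V. threshold V d i \<le> (real k - 1) / ?m} = k \<and>
      card {i\<in>V. threshold V d i < real k / ?m} = k"
  proof (rule discrete_fixed_point)
    show "card {i\<in>V. threshold V d i \<le> (real k - 1) / ?m} \<le> card {i\<in>V. threshold V d i < real k / ?m}" for k
      using fin grid_step_less[OF n2, of k] by (intro card_mono) auto
    show "card {i\<in>V. threshold V d i < real k / ?m} \<le> card {i\<in>V. threshold V d i \<le> (real (Suc k) - 1) / ?m}" for k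
      using fin by (intro card_mono) auto
    show "card {i\<in>V. threshold V d i < real (card V) / ?m} \<le> card V"
      using fin by (intro card_mono) auto
  qed
  then show ?thesis
    unfolding nash_level_def .
qed

lemma Zset_condition_iff:
  assumes fin: "finite V" and n2: "card V \<ge> 2"
  shows "(\<forall>\<epsilon>. 0 < \<epsilon> \<and> \<epsilon> \<le> 1 / real (card V) \<longrightarrow>
            real k / real (card V) = Fc V d (real (card V) / (real (card V) - 1) * (real k / real (card V) - \<epsilon>)))
         \<longleftrightarrow> nash_level V d k"
proof -
  define n where "n = real (card V)"
  define m where "m = real (card V) - 1"
  have n: "n > 0" and m: "m > 0" and nm: "m = n - 1"
    using n2 unfolding n_def m_def by auto
  have Fc_eq: "real k / n = Fc V d t \<longleftrightarrow> card {i\<in>V. threshold V d i \<le> t} = k" for t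
    unfolding Fc_def n_def[symmetric] using n by (auto simp: divide_cancel_right)
  have reparam: "n / m * (real k / n - \<epsilon>) = (real k - n * \<epsilon>) / m" for \<epsilon>
    using n m by (simp add: field_simps)
  have "(\<forall>\<epsilon>. 0 < \<epsilon> \<and> \<epsilon> \<le> 1 / n \<longrightarrow> real k / n = Fc V d (n / m * (real k / n - \<epsilon>)))
      \<longleftrightarrow> (\<forall>t. (real k - 1) / m \<le> t \<and> t < real k / m \<longrightarrow> card {i\<in>V. threshold V d i \<le> t} = k)"
    (is "?eps \<longleftrightarrow> ?t")
  proof
    assume ?eps
    show ?t
    proof (intro allI impI)
      fix t assume t: "(real k - 1) / m \<le> t \<and> t < real k / m"
      define \<epsilon> where "\<epsilon> = (real k - m * t) / n"
      have "real k - 1 \<le> m * t \<and> m * t < real k"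
        using t m by (simp add: field_simps)
      then have "0 < \<epsilon> \<and> \<epsilon> \<le> 1 / n"
        using n unfolding \<epsilon>_def by (auto intro: divide_right_mono)
      moreover have "(real k - n * \<epsilon>) / m = t"
        using n m unfolding \<epsilon>_def by (simp add: field_simps)
      ultimately show "card {i\<in>V. threshold V d i \<le> t} = k"
        using \<open>?eps\<close> Fc_eq reparam by metis
    qed
  next
    assume ?t
    show ?eps
    proof (intro allI impI)
      fix \<epsilon> :: real assume "0 < \<epsilon> \<and> \<epsilon> \<le> 1 / n"
      then have "(real k - 1) / m \<le> (real k - n * \<epsilon>) / m \<and> (real k - n * \<epsilon>) / m < real k / m"
        using n m by (auto simp: field_simps)
      then show "real k / n = Fc V d (n / m * (real k / n - \<epsilon>))"
        using \<open>?t\<close> Fc_eq reparam by metis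
    qed
  qed
  also have "?t \<longleftrightarrow> nash_level V d k"
    unfolding nash_level_def m_def using card_sublevel_constant_iff[OF fin grid_step_less[OF n2]] by blast
  finally show ?thesis
    unfolding n_def m_def .
qed

lemma Zset_eq_image:
  assumes "finite V" and "card V \<ge> 2"
  shows "Zset V d = (\<lambda>k. real k / real (card V)) ` {k. nash_level V d k}"
proof -
  have "z \<in> Zset V d \<longleftrightarrow> (\<exists>k. nash_level V d k \<and> z = real k / real (card V))" for z
    unfolding Zset_def using Zset_condition_iff[OF assms] nash_level_le_card[OF assms(1)] by blast
  then show ?thesis
    by blast
qed

lemma zfrac_nash_inj:
  assumes "finite V" and "card V \<ge> 2"
  shows "inj_on (zfrac V) (nash V d)"
proof (rule inj_onI)
  fix x y assume x: "x \<in> nash V d" and y: "y \<in> nash V d" and eq: "zfrac V x = zfrac V y"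
  obtain k where k: "nash_level V d k" "x = level_profile V d k"
    using x nash_eq_image[OF assms] by blast
  obtain l where l: "nash_level V d l" "y = level_profile V d l"
    using y nash_eq_image[OF assms] by blast
  have "real k / real (card V) = real l / real (card V)"
    using eq zfrac_level_profile[OF k(1)] zfrac_level_profile[OF l(1)] k(2) l(2) by simp
  then show "x = y"
    using k l assms(2) by (simp add: divide_cancel_right)
qed

lemma zfrac_nash_image:
  assumes "finite V" and "card V \<ge> 2"
  shows "zfrac V ` nash V d = Zset V d"
  unfolding nash_eq_image[OF assms] Zset_eq_image[OF assms] image_image
  using zfrac_level_profile by (intro image_cong) auto

theorem mainTheorem4:
  fixes V :: "'a set" and d :: "'a \<Rightarrow> real"
  assumes "finite V" and "card V \<ge> 2"
  shows "(\<forall>z\<in>Zset V d. \<exists>!x. x \<in> nash V d \<and> zfrac V x = z)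
         \<and> card (nash V d) = card (Zset V d)
         \<and> 1 \<le> card (Zset V d) \<and> card (Zset V d) \<le> card V + 1"
proof (intro conjI)
  show "\<forall>z\<in>Zset V d. \<exists>!x. x \<in> nash V d \<and> zfrac V x = z"
  proof
    fix z assume "z \<in> Zset V d"
    then have "z \<in> zfrac V ` nash V d"
      unfolding zfrac_nash_image[OF assms] .
    then obtain x where x: "x \<in> nash V d" "zfrac V x = z"
      by blast
    show "\<exists>!x. x \<in> nash V d \<and> zfrac V x = z"
    proof (rule ex1I)
      show "x \<in> nash V d \<and> zfrac V x = z"
        using x by simp
      fix y assume y: "y \<in> nash V d \<and> zfrac V y = z"
      then have "zfrac V y = zfrac V x"
        using x by simp
      then show "y = x"
        using inj_onD[OF zfrac_nash_inj[OF assms, of d]] x(1) y by blast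
    qed
  qed
  show "card (nash V d) = card (Zset V d)"
    unfolding zfrac_nash_image[OF assms, of d, symmetric] by (rule card_image[OF zfrac_nash_inj[OF assms], symmetric])
  have levels: "{k. nash_level V d k} \<subseteq> {..card V}"
    using nash_level_le_card[OF assms(1)] by auto
  then have finite_levels: "finite {k. nash_level V d k}"
    by (rule finite_subset) simp
  then have "finite (Zset V d)"
    unfolding Zset_eq_image[OF assms] by (rule finite_imageI)
  moreover have "Zset V d \<noteq> {}"
    unfolding Zset_eq_image[OF assms] using exists_nash_level[OF assms] by auto
  ultimately show "1 \<le> card (Zset V d)"
    by (simp add: Suc_le_eq card_gt_0_iff)
  have "card (Zset V d) \<le> card {k. nash_level V d k}"
    unfolding Zset_eq_image[OF assms] by (rule card_image_le[OF finite_levels])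
  also have "\<dots> \<le> card V + 1"
    using card_mono[OF _ levels] by simp
  finally show "card (Zset V d) \<le> card V + 1" .
qed

end
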